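(* Let $(J,S)$ be a homogeneous $d$-dimensional multi-time Markov renewal chain with semi-Markov kernel $q$, $u=\sum_{n\ge0}q^{(n)}$, and Markov renewal function $U$. Then $U$ satisfies the multi-time Markov renewal equation $U=\mathrm{dg}(\mathbbm{1}_s)+q*U$, and consequently $U=\mathrm{dg}(\mathbbm{1}_s)*u$, i.e. $U(k_{1:d})=\sum_{l\le k_{1:d}}u(l)$.
   Context: $E=\{1,\dots,s\}$; $\mathcal{M}_s(\mathbb{N}^d)$ is the set of functions $\mathbb{N}^d\to\mathbb{R}^{s\times s}$ with convolution $[A*B](k)=\sum_{l+l'=k}A(l)B(l')$, powers $A^{(0)}=\mathbbm{I}_s$ ($I_s$ at $0_d$, zero elsewhere), $A^{(n)}=A*A^{(n-1)}$. $\mathbbm{1}$ is the real sequence identically $1$ on $\mathbb{N}^d$, and $\mathrm{dg}(\mathbbm{1}_s)$ is the matrix sequence equal to $I_s$ at every $k\in\mathbb{N}^d$ (so $[\mathrm{dg}(\mathbbm{1}_s)*A](k)=\sum_{l\le k}A(l)$). $\mathbb{N}^d$ carries the componentwise partial order $\le$, with $k<l$ meaning $k\le l$, $k\ne l$. A homogeneous $d$-dimensional multi-time Markov renewal chain is a process $(J_n,S_n)_{n\in\mathbb{N}}$, $J_n\in E$, $S_n\in\mathbb{N}^d$, $S_0=0_d$, $S_n<S_{n+1}$, with a.s. $\mathbb{P}(J_{n+1}=j,S_{n+1}-S_n=k\mid J_{0:n},S_{0:n})=q_{J_nj}(k)$, $q_{ij}(k)=\mathbb{P}(J_{n+1}=j,S_{n+1}-S_n=k\mid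 J_n=i)$ independent of $n$. $N(k)=\sup\{n:S_n\le k\}$; $\widetilde{N}_j(k)=\sum_{n=0}^{N(k)}\mathbf{1}\{J_n=j\}$; the Markov renewal function is $U_{ij}(k)=\mathbb{E}_i[\widetilde{N}_j(k)]$, where $\mathbb{E}_i$ is expectation given $J_0=i$. *)

theory Defs
  imports "HOL-Probability.Probability"
begin

text \<open>Matrix sequences on the multi-time index set: the index set \<open>\<nat>^d\<close> is
  \<open>nat ^ 'd\<close> (componentwise order, componentwise addition); an s x s real matrix is
  a function \<open>nat \<Rightarrow> nat \<Rightarrow> real\<close> whose relevant entries are those with indices in
  \<open>{1..s}\<close>. A matrix sequence \<open>A\<close> is written \<open>A k i j\<close> for the (i,j) entry of A(k).\<close>

type_synonym 'd mseq = "nat ^ 'd \<Rightarrow> nat \<Rightarrow> nat \<Rightarrow> real"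

definition mconv :: "nat \<Rightarrow> 'd::finite mseq \<Rightarrow> 'd mseq \<Rightarrow> 'd mseq" where
  "mconv s A B = (\<lambda>k i j. \<Sum>(l, l') \<in> {(l, l'). l + l' = k}. \<Sum>m\<in>{1..s}. A l i m * B l' m j)"

definition munit :: "'d::finite mseq" where
  "munit = (\<lambda>k i j. if k = 0 \<and> i = j then 1 else 0)"

primrec mpow :: "nat \<Rightarrow> 'd::finite mseq \<Rightarrow> nat \<Rightarrow> 'd mseq" where
  "mpow s A 0 = munit"
| "mpow s A (Suc n) = mconv s A (mpow s A n)"

definition dg1 :: "'d::finite mseq" where
  "dg1 = (\<lambda>k i j. if i = j then 1 else 0)"

definition useq :: "nat \<Rightarrow> 'd::finite mseq \<Rightarrow> 'd mseq" where
  "useq s q = (\<lambda>k i j. \<Sum>n. mpow s q n k i j)"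

definition Ncount :: "(nat \<Rightarrow> 'w \<Rightarrow> nat ^ 'd::finite) \<Rightarrow> nat ^ 'd \<Rightarrow> 'w \<Rightarrow> nat" where
  "Ncount S k \<omega> = Sup {n. S n \<omega> \<le> k}"

definition Ntilde :: "(nat \<Rightarrow> 'w \<Rightarrow> nat) \<Rightarrow> (nat \<Rightarrow> 'w \<Rightarrow> nat ^ 'd::finite) \<Rightarrow> nat \<Rightarrow> nat ^ 'd \<Rightarrow> 'w \<Rightarrow> real" where
  "Ntilde J S j k \<omega> = (\<Sum>n\<in>{0..Ncount S k \<omega>}. if J n \<omega> = j then 1 else 0)"

text \<open>Markov renewal function \<open>U_ij(k) = E_i[\<tilde>N_j(k)]\<close>, where \<open>M i\<close> is the law of the
  chain started in state i.\<close>
definition MRF :: "(nat \<Rightarrow> 'w measure) \<Rightarrow> (nat \<Rightarrow> 'w \<Rightarrow> nat) \<Rightarrow> (nat \<Rightarrow> 'w \<Rightarrow> nat ^ 'd::finite) \<Rightarrow> 'd mseq" where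
  "MRF M J S = (\<lambda>k i j. integral\<^sup>L (M i) (Ntilde J S j k))"

end

(* Conditioning on the whole history and applying the Markov property gives, by induction on n,
   P_i(J_n = j, S_n = l) = q^(n)(l)_ij.  As S is strictly increasing, S_n <= k forces
   n <= |k| := k_1 + ... + k_d, so N~_j(k) is a finite sum of indicators and
   U(k) = sum_{l <= k} sum_{n <= |k|} q^(n)(l) = sum_{l <= k} u(l), since q(0) = 0 makes
   q^(n)(l) vanish for n > |l|.  The same finiteness gives u = delta + q * u, and summing over
   l <= k, i.e. convolving with dg(1_s), which commutes with q, turns this into
   U = dg(1_s) + q * U. *)

theory Submission
  imports Defs
begin

lemma finite_atMost_vec_nat [simp]: "finite {..k :: nat ^ 'd::finite}"
proof -
  have "{..k} \<subseteq> vec_lambda ` PiE UNIV (\<lambda>c. {..k $ c})"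
  proof
    fix x assume "x \<in> {..k}"
    then have "vec_nth x \<in> PiE UNIV (\<lambda>c. {..k $ c})" by (auto simp: less_eq_vec_def)
    then show "x \<in> vec_lambda ` PiE UNIV (\<lambda>c. {..k $ c})" by (metis image_eqI vec_nth_inverse)
  qed
  then show ?thesis by (rule finite_subset) (intro finite_imageI finite_PiE; simp)
qed

lemma sum_add_eq_vec_nat:
  fixes k :: "nat ^ 'd::finite"
  shows "(\<Sum>(l, l') \<in> {(l, l'). l + l' = k}. f l l') = (\<Sum>l\<le>k. f l (k - l))"
proof -
  have "bij_betw (\<lambda>l. (l, k - l)) {..k} {(l, l'). l + l' = k}"
    by (rule bij_betwI[where g = fst]; auto simp: vec_eq_iff less_eq_vec_def;
        metis le_add1 add_diff_cancel_left')
  then show ?thesis by (simp add: sum.reindex_bij_betw[symmetric])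
qed

lemma sum_atMost_reflect_vec_nat:
  fixes k :: "nat ^ 'd::finite"
  shows "(\<Sum>l\<le>k. f (k - l)) = (\<Sum>l\<le>k. f l)"
proof -
  have "bij_betw (\<lambda>l. k - l) {..k} {..k}"
    by (intro bij_betwI[where g = "\<lambda>l. k - l"]; auto simp: vec_eq_iff less_eq_vec_def)
  then show ?thesis using sum.reindex_bij_betw by blast
qed

lemma sum_atMost_atMost_diff_vec_nat:
  fixes k :: "nat ^ 'd::finite"
  shows "(\<Sum>x\<le>k. \<Sum>a\<le>x. f a (x - a) (k - x)) = (\<Sum>a\<le>k. \<Sum>b\<le>k - a. f a b (k - a - b))"
proof -
  have "(\<Sum>x\<le>k. \<Sum>a\<le>x. f a (x - a) (k - x)) = (\<Sum>x\<le>k. \<Sum>a\<in>{a\<in>{..k}. a \<le> x}. f a (x - a) (k - x))"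
    by (intro sum.cong refl) (auto intro: order_trans)
  also have "\<dots> = (\<Sum>a\<le>k. \<Sum>x\<in>{x\<in>{..k}. a \<le> x}. f a (x - a) (k - x))"
    by (rule sum.swap_restrict) simp_all
  also have "\<dots> = (\<Sum>a\<le>k. \<Sum>b\<le>k - a. f a b (k - a - b))"
  proof (rule sum.cong[OF refl])
    fix a assume "a \<in> {..k}"
    then have "bij_betw (\<lambda>b. a + b) {..k - a} {x\<in>{..k}. a \<le> x}"
      by (intro bij_betwI[where g = "\<lambda>x. x - a"]; auto simp: vec_eq_iff less_eq_vec_def;
          metis le_diff_conv2 add.commute diff_le_mono le_add_diff_inverse)
    from sum.reindex_bij_betw[OF this, of "\<lambda>x. f a (x - a) (k - x)"]
    show "(\<Sum>x\<in>{x\<in>{..k}. a \<le> x}. f a (x - a) (k - x)) = (\<Sum>b\<le>k - a. f a b (k - a - b))"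
      by (simp add: diff_diff_add)
  qed
  finally show ?thesis .
qed

lemma mconv_eq_sum_atMost:
  "mconv s A B k i j = (\<Sum>l\<le>k. \<Sum>m\<in>{1..s}. A l i m * B (k - l) m j)"
  unfolding mconv_def by (simp add: sum_add_eq_vec_nat)

lemma mconv_assoc: "mconv s (mconv s A B) C k i j = mconv s A (mconv s B C) k i j"
proof -
  have "mconv s (mconv s A B) C k i j =
      (\<Sum>x\<le>k. \<Sum>a\<le>x. \<Sum>m\<in>{1..s}. \<Sum>r\<in>{1..s}. A a i r * B (x - a) r m * C (k - x) m j)"
    unfolding mconv_eq_sum_atMost
    by (simp add: sum_distrib_right, intro sum.cong refl, rule sum.swap)
  also have "\<dots> = (\<Sum>a\<le>k. \<Sum>b\<le>k - a. \<Sum>m\<in>{1..s}. \<Sum>r\<in>{1..s}.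
                     A a i r * B b r m * C (k - a - b) m j)"
    by (rule sum_atMost_atMost_diff_vec_nat)
  also have "\<dots> = mconv s A (mconv s B C) k i j"
    unfolding mconv_eq_sum_atMost
    by (simp add: sum_distrib_left mult.assoc, rule sum.cong[OF refl],
        rule trans[OF _ sum.swap], rule sum.cong[OF refl], rule sum.swap)
  finally show ?thesis .
qed

lemma mconv_cong_left:
  "(\<And>l m. m \<in> {1..s} \<Longrightarrow> A l i m = A' l i m) \<Longrightarrow> mconv s A B k i j = mconv s A' B k i j"
  unfolding mconv_eq_sum_atMost by (intro sum.cong refl) auto

lemma mconv_cong_right:
  "(\<And>l m. m \<in> {1..s} \<Longrightarrow> B l m j = B' l m j) \<Longrightarrow> mconv s A B k i j = mconv s A B' k i j"
  unfolding mconv_eq_sum_atMost by (intro sum.cong refl) auto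

lemma if_then_1_else_0_mult [simp]:
  "(if P then 1 else 0) * x = (if P then x else (0 :: 'a :: {monoid_mult, mult_zero}))"
  by simp

lemma mconv_munit_left:
  assumes "i \<in> {1..s}"
  shows "mconv s munit A k i j = A k i j"
proof -
  have "mconv s munit A k i j = (\<Sum>l\<le>k. if l = 0 then A k i j else 0)"
    unfolding mconv_eq_sum_atMost munit_def using assms
    by (intro sum.cong refl) (simp add: sum.delta)
  then show ?thesis by (simp add: less_eq_vec_def)
qed

lemma mconv_munit_right:
  assumes "j \<in> {1..s}"
  shows "mconv s A munit k i j = A k i j"
proof -
  have "k - l = 0 \<longleftrightarrow> l = k" if "l \<le> k" for l
    using that by (auto simp: vec_eq_iff less_eq_vec_def intro: order.antisym)
  then have "mconv s A munit k i j = (\<Sum>l\<le>k. if l = k then A l i j else 0)"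
    unfolding mconv_eq_sum_atMost munit_def using assms
    by (intro sum.cong refl) (auto simp: if_distrib cong: if_cong)
  then show ?thesis by simp
qed

lemma mconv_dg1_left:
  assumes "i \<in> {1..s}"
  shows "mconv s dg1 A k i j = (\<Sum>l\<le>k. A l i j)"
proof -
  have "mconv s dg1 A k i j = (\<Sum>l\<le>k. A (k - l) i j)"
    unfolding mconv_eq_sum_atMost dg1_def using assms
    by (intro sum.cong refl) (simp add: sum.delta)
  with sum_atMost_reflect_vec_nat[of "\<lambda>l. A l i j" k] show ?thesis by simp
qed

lemma mconv_dg1_right: "j \<in> {1..s} \<Longrightarrow> mconv s A dg1 k i j = (\<Sum>l\<le>k. A l i j)"
  unfolding mconv_eq_sum_atMost dg1_def
  by (simp add: if_distrib sum.delta cong: if_cong)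

lemma mpow_Suc_right:
  "i \<in> {1..s} \<Longrightarrow> j \<in> {1..s} \<Longrightarrow> mpow s q (Suc n) k i j = mconv s (mpow s q n) q k i j"
proof (induction n arbitrary: k i j)
  case 0
  then show ?case by (simp add: mconv_munit_right mconv_munit_left)
next
  case (Suc n)
  have "mpow s q (Suc (Suc n)) k i j = mconv s q (mpow s q (Suc n)) k i j"
    by simp
  also have "\<dots> = mconv s q (mconv s (mpow s q n) q) k i j"
    by (rule mconv_cong_right) (rule Suc.IH; use Suc.prems in auto)
  also have "\<dots> = mconv s (mpow s q (Suc n)) q k i j"
    by (simp add: mconv_assoc)
  finally show ?case .
qed

definition coord_sum :: "nat ^ 'd::finite \<Rightarrow> nat" where
  "coord_sum x = (\<Sum>c\<in>UNIV. x $ c)"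

lemma coord_sum_mono: "x \<le> y \<Longrightarrow> coord_sum x \<le> coord_sum y"
  unfolding coord_sum_def by (rule sum_mono) (simp add: less_eq_vec_def)

lemma coord_sum_strict_mono: "x < y \<Longrightarrow> coord_sum x < coord_sum y"
  unfolding coord_sum_def
  by (rule sum_strict_mono_ex1) (auto simp: less_vec_def less_eq_vec_def not_le)

lemma diff_less_vec_nat:
  fixes a l :: "nat ^ 'd::finite"
  assumes "a \<le> l" and "a \<noteq> 0"
  shows "l - a < l"
proof -
  obtain c where "a $ c \<noteq> 0" using assms(2) by (auto simp: vec_eq_iff)
  moreover have "a $ c \<le> l $ c" using assms(1) by (simp add: less_eq_vec_def)
  ultimately have "\<not> l \<le> l - a" by (auto simp: less_eq_vec_def intro!: exI[of _ c])
  then show ?thesis by (simp add: less_vec_def less_eq_vec_def)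
qed

lemma mpow_eq_0_if_coord_sum_less:
  assumes q0: "\<And>i j. i \<in> {1..s} \<Longrightarrow> j \<in> {1..s} \<Longrightarrow> q 0 i j = 0"
  shows "i \<in> {1..s} \<Longrightarrow> j \<in> {1..s} \<Longrightarrow> coord_sum l < n \<Longrightarrow> mpow s q n l i j = 0"
proof (induction n arbitrary: l i j)
  case 0
  then show ?case by simp
next
  case (Suc n)
  have "q a i m * mpow s q n (l - a) m j = 0" if "a \<le> l" "m \<in> {1..s}" for a m
  proof (cases "a = 0")
    case True
    with q0 Suc.prems(1) that(2) show ?thesis by simp
  next
    case False
    with that(1) have "coord_sum (l - a) < coord_sum l"
      by (intro coord_sum_strict_mono diff_less_vec_nat)
    with Suc.IH[OF that(2) Suc.prems(2)] Suc.prems(3) show ?thesis by simp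
  qed
  then show ?case by (auto simp: mconv_eq_sum_atMost intro!: sum.neutral)
qed

lemma useq_eq_sum_mpow:
  assumes "\<And>i j. i \<in> {1..s} \<Longrightarrow> j \<in> {1..s} \<Longrightarrow> q 0 i j = 0"
    and "i \<in> {1..s}" "j \<in> {1..s}" "coord_sum l \<le> N"
  shows "useq s q l i j = (\<Sum>n\<le>N. mpow s q n l i j)"
  unfolding useq_def
  by (rule suminf_finite) (use mpow_eq_0_if_coord_sum_less[of s q, OF assms(1-3)] assms(4) in auto)

lemma useq_renewal:
  assumes q0: "\<And>i j. i \<in> {1..s} \<Longrightarrow> j \<in> {1..s} \<Longrightarrow> q 0 i j = 0"
    and i: "i \<in> {1..s}" and j: "j \<in> {1..s}"
  shows "useq s q l i j = munit l i j + mconv s q (useq s q) l i j"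
proof -
  have "useq s q l i j = (\<Sum>n\<le>Suc (coord_sum l). mpow s q n l i j)"
    using useq_eq_sum_mpow[of s q, OF q0 i j, of l "Suc (coord_sum l)"] by simp
  also have "\<dots> = munit l i j + (\<Sum>n\<le>coord_sum l. mconv s q (mpow s q n) l i j)"
    by (subst sum.atMost_Suc_shift) simp
  also have "(\<Sum>n\<le>coord_sum l. mconv s q (mpow s q n) l i j)
      = (\<Sum>a\<le>l. \<Sum>m\<in>{1..s}. q a i m * (\<Sum>n\<le>coord_sum l. mpow s q n (l - a) m j))"
    unfolding mconv_eq_sum_atMost
    by (simp add: sum_distrib_left) (subst sum.swap, rule sum.cong[OF refl], rule sum.swap)
  also have "\<dots> = mconv s q (useq s q) l i j"
    unfolding mconv_eq_sum_atMost
  proof (intro sum.cong refl)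
    fix a m assume "a \<in> {..l}" "m \<in> {1..s}"
    have "coord_sum (l - a) \<le> coord_sum l" by (rule coord_sum_mono) (simp add: less_eq_vec_def)
    with useq_eq_sum_mpow[of s q, OF q0 \<open>m \<in> {1..s}\<close> j]
    show "q a i m * (\<Sum>n\<le>coord_sum l. mpow s q n (l - a) m j) = q a i m * useq s q (l - a) m j"
      by simp
  qed
  finally show ?thesis .
qed

lemma renewal_equation_of_cumulative:
  assumes u: "\<And>l i j. i \<in> {1..s} \<Longrightarrow> j \<in> {1..s} \<Longrightarrow> u l i j = munit l i j + mconv s q u l i j"
    and U: "\<And>k i j. i \<in> {1..s} \<Longrightarrow> j \<in> {1..s} \<Longrightarrow> U k i j = (\<Sum>l\<le>k. u l i j)"
    and i: "i \<in> {1..s}" and j: "j \<in> {1..s}"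
  shows "U k i j = dg1 k i j + mconv s q U k i j"
proof -
  have "(\<Sum>l\<le>k. mconv s q u l i j) = mconv s dg1 (mconv s q u) k i j"
    by (rule mconv_dg1_left[OF i, symmetric])
  also have "\<dots> = mconv s (mconv s dg1 q) u k i j"
    by (rule mconv_assoc[symmetric])
  also have "\<dots> = mconv s (mconv s q dg1) u k i j"
    \<comment> \<open>both sides are the partial sums of \<open>q\<close>\<close>
    by (rule mconv_cong_left) (simp add: mconv_dg1_left[OF i] mconv_dg1_right)
  also have "\<dots> = mconv s q (mconv s dg1 u) k i j"
    by (rule mconv_assoc)
  also have "\<dots> = mconv s q U k i j"
  proof (rule mconv_cong_right)
    fix l m assume "m \<in> {1..s}"
    then show "mconv s dg1 u l m j = U l m j" by (simp add: mconv_dg1_left U[OF _ j])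
  qed
  finally have "(\<Sum>l\<le>k. mconv s q u l i j) = mconv s q U k i j" .
  moreover have "(\<Sum>l\<le>k. munit l i j) = dg1 k i j"
    by (simp add: munit_def dg1_def less_eq_vec_def)
  ultimately show ?thesis
    by (simp add: U[OF i j] u[OF i j] sum.distrib)
qed

definition histories ::
    "nat \<Rightarrow> nat \<Rightarrow> nat \<Rightarrow> nat ^ 'd::finite \<Rightarrow> ((nat \<Rightarrow> nat) \<times> (nat \<Rightarrow> nat ^ 'd)) set" where
  "histories s n m a =
     {h \<in> ({..n} \<rightarrow>\<^sub>E {1..s}) \<times> ({..n} \<rightarrow>\<^sub>E {..a}). fst h n = m \<and> snd h n = a}"

lemma finite_histories: "finite (histories s n m a)"
  unfolding histories_def
  by (rule finite_subset[of _ "({..n} \<rightarrow>\<^sub>E {1..s}) \<times> ({..n} \<rightarrow>\<^sub>E {..a})"])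
     (auto intro!: finite_PiE)

locale markov_renewal_chain =
  fixes s :: nat
    and q :: "'d::finite mseq"
    and M :: "nat \<Rightarrow> 'w measure"
    and J :: "nat \<Rightarrow> 'w \<Rightarrow> nat"
    and S :: "nat \<Rightarrow> 'w \<Rightarrow> nat ^ 'd"
  assumes kernel_zero: "\<And>i j. i \<in> {1..s} \<Longrightarrow> j \<in> {1..s} \<Longrightarrow> q 0 i j = 0"
    and prob: "\<And>i. i \<in> {1..s} \<Longrightarrow> prob_space (M i)"
    and J_meas: "\<And>i n. i \<in> {1..s} \<Longrightarrow> J n \<in> measurable (M i) (count_space UNIV)"
    and S_meas: "\<And>i n. i \<in> {1..s} \<Longrightarrow> S n \<in> measurable (M i) (count_space UNIV)"
    and J_range: "\<And>i n \<omega>. i \<in> {1..s} \<Longrightarrow> \<omega> \<in> space (M i) \<Longrightarrow> J n \<omega> \<in> {1..s}"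
    and S_zero: "\<And>i \<omega>. i \<in> {1..s} \<Longrightarrow> \<omega> \<in> space (M i) \<Longrightarrow> S 0 \<omega> = 0"
    and S_incr: "\<And>i n \<omega>. i \<in> {1..s} \<Longrightarrow> \<omega> \<in> space (M i) \<Longrightarrow> S n \<omega> < S (Suc n) \<omega>"
    and J_init: "\<And>i. i \<in> {1..s} \<Longrightarrow> measure (M i) {\<omega> \<in> space (M i). J 0 \<omega> = i} = 1"
    and markov: "\<And>i n js ss j k. i \<in> {1..s} \<Longrightarrow> j \<in> {1..s} \<Longrightarrow>
        measure (M i) {\<omega> \<in> space (M i). (\<forall>m\<le>n. J m \<omega> = js m \<and> S m \<omega> = ss m)
                                   \<and> J (Suc n) \<omega> = j \<and> S (Suc n) \<omega> = ss n + k}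
      = q k (js n) j * measure (M i) {\<omega> \<in> space (M i). \<forall>m\<le>n. J m \<omega> = js m \<and> S m \<omega> = ss m}"
begin

lemma S_mono:
  assumes "i \<in> {1..s}" and "\<omega> \<in> space (M i)" and "t \<le> n"
  shows "S t \<omega> \<le> S n \<omega>"
  using less_imp_le[OF S_incr[OF assms(1,2)]] assms(3) by (rule lift_Suc_mono_le)

lemma le_coord_sum_S: "i \<in> {1..s} \<Longrightarrow> \<omega> \<in> space (M i) \<Longrightarrow> n \<le> coord_sum (S n \<omega>)"
proof (induction n)
  case (Suc n)
  with coord_sum_strict_mono[OF S_incr[OF Suc.prems, of n]] show ?case by linarith
qed simp

lemma le_coord_sum_if_S_le:
  assumes "i \<in> {1..s}" and "\<omega> \<in> space (M i)" and "S n \<omega> \<le> k"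
  shows "n \<le> coord_sum k"
  using le_coord_sum_S[OF assms(1,2), of n] coord_sum_mono[OF assms(3)] by linarith

lemma atLeastAtMost_Ncount:
  assumes i: "i \<in> {1..s}" and \<omega>: "\<omega> \<in> space (M i)"
  shows "{0..Ncount S k \<omega>} = {n. S n \<omega> \<le> k}"
proof -
  let ?A = "{n. S n \<omega> \<le> k}"
  have "finite ?A"
    by (rule finite_subset[of _ "{..coord_sum k}"]) (auto intro: le_coord_sum_if_S_le[OF i \<omega>])
  moreover have "0 \<in> ?A" using S_zero[OF i \<omega>] by (simp add: less_eq_vec_def)
  then have "?A \<noteq> {}" by blast
  ultimately have N: "Ncount S k \<omega> = Max ?A" and "Max ?A \<in> ?A"
    unfolding Ncount_def by (rule cSup_eq_Max, rule Max_in)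
  show ?thesis
  proof (intro equalityI subsetI)
    fix n assume "n \<in> {0..Ncount S k \<omega>}"
    then have "S n \<omega> \<le> S (Max ?A) \<omega>" using N S_mono[OF i \<omega>] by simp
    with \<open>Max ?A \<in> ?A\<close> show "n \<in> ?A" by simp
  next
    fix n assume "n \<in> ?A"
    with \<open>finite ?A\<close> show "n \<in> {0..Ncount S k \<omega>}" unfolding N by simp
  qed
qed

lemma Ntilde_eq_sum_indicator:
  assumes i: "i \<in> {1..s}" and \<omega>: "\<omega> \<in> space (M i)"
  shows "Ntilde J S j k \<omega>
    = (\<Sum>n\<le>coord_sum k. indicator {\<omega> \<in> space (M i). J n \<omega> = j \<and> S n \<omega> \<le> k} \<omega>)"
proof -
  have "(\<Sum>n\<in>{n. S n \<omega> \<le> k}. if J n \<omega> = j then 1 else 0)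
      = (\<Sum>n\<le>coord_sum k. indicator {\<omega> \<in> space (M i). J n \<omega> = j \<and> S n \<omega> \<le> k} \<omega>)"
    using \<omega> by (intro sum.mono_neutral_cong_left)
      (auto simp: indicator_def intro: le_coord_sum_if_S_le[OF i \<omega>])
  then show ?thesis
    unfolding Ntilde_def atLeastAtMost_Ncount[OF i \<omega>] .
qed

lemma measure_finite_disjoint_UN:
  "i \<in> {1..s} \<Longrightarrow> finite I \<Longrightarrow> (\<And>x. x \<in> I \<Longrightarrow> A x \<in> sets (M i)) \<Longrightarrow>
    disjoint_family_on A I \<Longrightarrow> measure (M i) (\<Union>x\<in>I. A x) = (\<Sum>x\<in>I. measure (M i) (A x))"
  using finite_measure.finite_measure_finite_Union[OF prob_space.finite_measure[OF prob]] by blast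

text \<open>The Markov hypothesis only speaks about events fixing the whole history up to step \<open>n\<close>;
  this splits an event about step \<open>n\<close> alone into such events.\<close>

lemma measure_Int_eq_sum_histories:
  assumes i: "i \<in> {1..s}" and B: "B \<in> sets (M i)"
  shows "measure (M i) ({\<omega> \<in> space (M i). J n \<omega> = m \<and> S n \<omega> = a} \<inter> B)
    = (\<Sum>h\<in>histories s n m a.
         measure (M i) ({\<omega> \<in> space (M i). \<forall>t\<le>n. J t \<omega> = fst h t \<and> S t \<omega> = snd h t} \<inter> B))"
proof -
  note [measurable] = J_meas[OF i] S_meas[OF i]
  let ?A = "\<lambda>h. {\<omega> \<in> space (M i). \<forall>t\<le>n. J t \<omega> = fst h t \<and> S t \<omega> = snd h t} \<inter> B"
  have "{\<omega> \<in> space (M i). J n \<omega> = m \<and> S n \<omega> = a} \<inter> B = (\<Union>h\<in>histories s n m a. ?A h)"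
  proof (intro equalityI subsetI)
    fix \<omega> assume \<omega>: "\<omega> \<in> {\<omega> \<in> space (M i). J n \<omega> = m \<and> S n \<omega> = a} \<inter> B"
    let ?h = "(restrict (\<lambda>t. J t \<omega>) {..n}, restrict (\<lambda>t. S t \<omega>) {..n})"
    have "?h \<in> histories s n m a"
      using \<omega> J_range[OF i, of \<omega>] S_mono[OF i, of \<omega>] by (auto simp: histories_def)
    moreover have "\<omega> \<in> ?A ?h" using \<omega> by auto
    ultimately show "\<omega> \<in> (\<Union>h\<in>histories s n m a. ?A h)" by blast
  qed (auto simp: histories_def)
  moreover have "disjoint_family_on ?A (histories s n m a)"
    unfolding disjoint_family_on_def
  proof (intro ballI impI, rule ccontr)
    fix h h' assume h: "h \<in> histories s n m a" "h' \<in> histories s n m a" "h \<noteq> h'"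
      and "?A h \<inter> ?A h' \<noteq> {}"
    then have agree: "\<forall>t\<le>n. fst h t = fst h' t \<and> snd h t = snd h' t" by auto
    have "fst h = fst h'"
      using h(1,2) agree by (intro PiE_ext[of _ "{..n}" "\<lambda>_. {1..s}"]) (auto simp: histories_def)
    moreover have "snd h = snd h'"
      using h(1,2) agree by (intro PiE_ext[of _ "{..n}" "\<lambda>_. {..a}"]) (auto simp: histories_def)
    ultimately show False using h(3) by (simp add: prod_eq_iff)
  qed
  moreover have "?A h \<in> sets (M i)" for h
    using B by measurable
  ultimately show ?thesis
    by (simp only: measure_finite_disjoint_UN[OF i finite_histories])
qed

lemma measure_transition:
  assumes i: "i \<in> {1..s}" and j: "j \<in> {1..s}"
  shows "measure (M i) {\<omega> \<in> space (M i). J n \<omega> = m \<and> S n \<omega> = a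
                                         \<and> J (Suc n) \<omega> = j \<and> S (Suc n) \<omega> = a + b}
       = q b m j * measure (M i) {\<omega> \<in> space (M i). J n \<omega> = m \<and> S n \<omega> = a}"
    (is "measure (M i) ?F = q b m j * measure (M i) ?E")
proof -
  note [measurable] = J_meas[OF i] S_meas[OF i]
  let ?B = "{\<omega> \<in> space (M i). J (Suc n) \<omega> = j \<and> S (Suc n) \<omega> = a + b}"
  let ?H = "\<lambda>h. {\<omega> \<in> space (M i). \<forall>t\<le>n. J t \<omega> = fst h t \<and> S t \<omega> = snd h t}"
  have "?B \<in> sets (M i)" by measurable
  have "?F = ?E \<inter> ?B" by auto
  then have "measure (M i) ?F = (\<Sum>h\<in>histories s n m a. measure (M i) (?H h \<inter> ?B))"
    by (simp only: measure_Int_eq_sum_histories[OF i \<open>?B \<in> sets (M i)\<close>])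
  also have "\<dots> = q b m j * (\<Sum>h\<in>histories s n m a. measure (M i) (?H h))"
  proof (subst sum_distrib_left, rule sum.cong[OF refl])
    fix h assume h: "h \<in> histories s n m a"
    then have "?H h \<inter> ?B = {\<omega> \<in> space (M i). (\<forall>t\<le>n. J t \<omega> = fst h t \<and> S t \<omega> = snd h t)
                                   \<and> J (Suc n) \<omega> = j \<and> S (Suc n) \<omega> = snd h n + b}"
      by (auto simp: histories_def)
    with markov[OF i j, of n "fst h" "snd h" b] h
    show "measure (M i) (?H h \<inter> ?B) = q b m j * measure (M i) (?H h)"
      by (simp add: histories_def)
  qed
  also have "\<dots> = q b m j * measure (M i) ?E"
    using measure_Int_eq_sum_histories[OF i sets.top, of n m a] by (simp add: Int_absorb2)
  finally show ?thesis .
qed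

lemma measure_J_S_Suc:
  assumes i: "i \<in> {1..s}" and j: "j \<in> {1..s}"
  shows "measure (M i) {\<omega> \<in> space (M i). J (Suc n) \<omega> = j \<and> S (Suc n) \<omega> = l}
    = (\<Sum>m\<in>{1..s}. \<Sum>a\<le>l. q (l - a) m j * measure (M i) {\<omega> \<in> space (M i). J n \<omega> = m \<and> S n \<omega> = a})"
proof -
  note [measurable] = J_meas[OF i] S_meas[OF i]
  let ?C = "\<lambda>x. {\<omega> \<in> space (M i).
              J n \<omega> = fst x \<and> S n \<omega> = snd x \<and> J (Suc n) \<omega> = j \<and> S (Suc n) \<omega> = l}"
  have "{\<omega> \<in> space (M i). J (Suc n) \<omega> = j \<and> S (Suc n) \<omega> = l} = (\<Union>x\<in>{1..s} \<times> {..l}. ?C x)"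
  proof (intro equalityI subsetI)
    fix \<omega> assume \<omega>: "\<omega> \<in> {\<omega> \<in> space (M i). J (Suc n) \<omega> = j \<and> S (Suc n) \<omega> = l}"
    then have "(J n \<omega>, S n \<omega>) \<in> {1..s} \<times> {..l}"
      using J_range[OF i, of \<omega> n] S_mono[OF i, of \<omega> n "Suc n"] by auto
    with \<omega> show "\<omega> \<in> (\<Union>x\<in>{1..s} \<times> {..l}. ?C x)" by force
  qed auto
  moreover have "disjoint_family_on ?C ({1..s} \<times> {..l})"
    by (auto simp: disjoint_family_on_def prod_eq_iff)
  moreover have "?C x \<in> sets (M i)" for x
    by measurable
  ultimately have "measure (M i) {\<omega> \<in> space (M i). J (Suc n) \<omega> = j \<and> S (Suc n) \<omega> = l}
      = (\<Sum>x\<in>{1..s} \<times> {..l}. measure (M i) (?C x))"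
    by (simp add: measure_finite_disjoint_UN[OF i])
  also have "\<dots> = (\<Sum>m\<in>{1..s}. \<Sum>a\<le>l. measure (M i) (?C (m, a)))"
    by (simp add: sum.cartesian_product case_prod_beta)
  also have "\<dots> = (\<Sum>m\<in>{1..s}. \<Sum>a\<le>l.
                     q (l - a) m j * measure (M i) {\<omega> \<in> space (M i). J n \<omega> = m \<and> S n \<omega> = a})"
  proof (intro sum.cong refl)
    fix m a assume "a \<in> {..l}"
    then have "a + (l - a) = l" by (simp add: vec_eq_iff less_eq_vec_def)
    with measure_transition[OF i j, of n m a "l - a"]
    show "measure (M i) (?C (m, a))
        = q (l - a) m j * measure (M i) {\<omega> \<in> space (M i). J n \<omega> = m \<and> S n \<omega> = a}"
      by simp
  qed
  finally show ?thesis .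
qed

lemma measure_J_0:
  assumes i: "i \<in> {1..s}"
  shows "measure (M i) {\<omega> \<in> space (M i). J 0 \<omega> = j} = (if j = i then 1 else 0)"
proof -
  interpret prob_space "M i" by (rule prob[OF i])
  note [measurable] = J_meas[OF i]
  have "measure (M i) {\<omega> \<in> space (M i). J 0 \<omega> = j}
      \<le> measure (M i) (space (M i) - {\<omega> \<in> space (M i). J 0 \<omega> = i})" if "j \<noteq> i"
    using that by (intro finite_measure_mono) auto
  moreover have "measure (M i) (space (M i) - {\<omega> \<in> space (M i). J 0 \<omega> = i}) = 0"
    using prob_compl[of "{\<omega> \<in> space (M i). J 0 \<omega> = i}"] J_init[OF i] by simp
  ultimately show ?thesis
    using J_init[OF i] by (auto intro: order.antisym)
qed

lemma measure_J_S_eq_mpow: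
  "i \<in> {1..s} \<Longrightarrow> j \<in> {1..s} \<Longrightarrow>
    measure (M i) {\<omega> \<in> space (M i). J n \<omega> = j \<and> S n \<omega> = l} = mpow s q n l i j"
proof (induction n arbitrary: l j)
  case 0
  then have "{\<omega> \<in> space (M i). J 0 \<omega> = j \<and> S 0 \<omega> = l}
      = (if l = 0 then {\<omega> \<in> space (M i). J 0 \<omega> = j} else {})"
    using S_zero by auto
  with 0 show ?case by (simp add: measure_J_0 munit_def)
next
  case (Suc n)
  have "measure (M i) {\<omega> \<in> space (M i). J (Suc n) \<omega> = j \<and> S (Suc n) \<omega> = l}
      = (\<Sum>m\<in>{1..s}. \<Sum>a\<le>l. q (l - a) m j * mpow s q n a i m)"
    using measure_J_S_Suc[OF Suc.prems, of n l] Suc.IH[OF Suc.prems(1)] by simp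
  also have "\<dots> = mpow s q (Suc n) l i j"
    unfolding mpow_Suc_right[OF Suc.prems] mconv_eq_sum_atMost
    by (subst sum.swap) (simp add: mult.commute)
  finally show ?case .
qed

lemma MRF_eq_sum_useq:
  assumes i: "i \<in> {1..s}" and j: "j \<in> {1..s}"
  shows "MRF M J S k i j = (\<Sum>l\<le>k. useq s q l i j)"
proof -
  interpret prob_space "M i" by (rule prob[OF i])
  note [measurable] = J_meas[OF i] S_meas[OF i]
  let ?E = "\<lambda>n. {\<omega> \<in> space (M i). J n \<omega> = j \<and> S n \<omega> \<le> k}"
  have "MRF M J S k i j = integral\<^sup>L (M i) (\<lambda>\<omega>. \<Sum>n\<le>coord_sum k. indicator (?E n) \<omega>)"
    unfolding MRF_def
    by (rule Bochner_Integration.integral_cong) (simp_all add: Ntilde_eq_sum_indicator[OF i])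
  also have "\<dots> = (\<Sum>n\<le>coord_sum k. measure (M i) (?E n))"
  proof (subst Bochner_Integration.integral_sum)
    fix n
    have "?E n \<in> sets (M i)" by measurable
    then show "integrable (M i) (indicat_real (?E n))"
      by (intro integrable_real_indicator) (auto simp: less_top[symmetric])
  qed (simp add: Int_absorb2)
  also have "\<dots> = (\<Sum>n\<le>coord_sum k. \<Sum>l\<le>k. mpow s q n l i j)"
  proof (rule sum.cong[OF refl])
    fix n
    have "?E n = (\<Union>l\<le>k. {\<omega> \<in> space (M i). J n \<omega> = j \<and> S n \<omega> = l})" by auto
    also have "measure (M i) \<dots> = (\<Sum>l\<le>k. measure (M i) {\<omega> \<in> space (M i). J n \<omega> = j \<and> S n \<omega> = l})"
      by (rule measure_finite_disjoint_UN[OF i]) (auto simp: disjoint_family_on_def)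
    finally show "measure (M i) (?E n) = (\<Sum>l\<le>k. mpow s q n l i j)"
      by (simp add: measure_J_S_eq_mpow[OF i j])
  qed
  also have "\<dots> = (\<Sum>l\<le>k. useq s q l i j)"
  proof (subst sum.swap, intro sum.cong refl)
    fix l assume "l \<in> {..k}"
    then have "coord_sum l \<le> coord_sum k" by (simp add: coord_sum_mono)
    then show "(\<Sum>n\<le>coord_sum k. mpow s q n l i j) = useq s q l i j"
      using useq_eq_sum_mpow[of s q, OF kernel_zero i j] by simp
  qed
  finally show ?thesis .
qed

end

theorem proposition9:
  fixes s :: nat
    and q :: "'d::finite mseq"
    and M :: "nat \<Rightarrow> 'w measure"
    and J :: "nat \<Rightarrow> 'w \<Rightarrow> nat"
    and S :: "nat \<Rightarrow> 'w \<Rightarrow> nat ^ 'd"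
  assumes kernel_nonneg: "\<And>i j k. i \<in> {1..s} \<Longrightarrow> j \<in> {1..s} \<Longrightarrow> 0 \<le> q k i j"
    and kernel_zero: "\<And>i j. i \<in> {1..s} \<Longrightarrow> j \<in> {1..s} \<Longrightarrow> q 0 i j = 0"
    and kernel_sum: "\<And>i. i \<in> {1..s} \<Longrightarrow> (\<Sum>j\<in>{1..s}. \<Sum>\<^sub>\<infinity>k. q k i j) = 1"
    and prob: "\<And>i. i \<in> {1..s} \<Longrightarrow> prob_space (M i)"
    and J_meas: "\<And>i n. i \<in> {1..s} \<Longrightarrow> J n \<in> measurable (M i) (count_space UNIV)"
    and S_meas: "\<And>i n. i \<in> {1..s} \<Longrightarrow> S n \<in> measurable (M i) (count_space UNIV)"
    and J_range: "\<And>i n \<omega>. i \<in> {1..s} \<Longrightarrow> \<omega> \<in> space (M i) \<Longrightarrow> J n \<omega> \<in> {1..s}"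
    and S_zero: "\<And>i \<omega>. i \<in> {1..s} \<Longrightarrow> \<omega> \<in> space (M i) \<Longrightarrow> S 0 \<omega> = 0"
    and S_incr: "\<And>i n \<omega>. i \<in> {1..s} \<Longrightarrow> \<omega> \<in> space (M i) \<Longrightarrow> S n \<omega> < S (Suc n) \<omega>"
    and J_init: "\<And>i. i \<in> {1..s} \<Longrightarrow> measure (M i) {\<omega> \<in> space (M i). J 0 \<omega> = i} = 1"
    and markov: "\<And>i n js ss j k. i \<in> {1..s} \<Longrightarrow> j \<in> {1..s} \<Longrightarrow>
        measure (M i) {\<omega> \<in> space (M i). (\<forall>m\<le>n. J m \<omega> = js m \<and> S m \<omega> = ss m)
                                   \<and> J (Suc n) \<omega> = j \<and> S (Suc n) \<omega> = ss n + k}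
      = q k (js n) j * measure (M i) {\<omega> \<in> space (M i). \<forall>m\<le>n. J m \<omega> = js m \<and> S m \<omega> = ss m}"
  shows "\<forall>i\<in>{1..s}. \<forall>j\<in>{1..s}. \<forall>k.
           MRF M J S k i j = dg1 k i j + mconv s q (MRF M J S) k i j
         \<and> MRF M J S k i j = mconv s dg1 (useq s q) k i j
         \<and> MRF M J S k i j = (\<Sum>l\<in>{l. l \<le> k}. useq s q l i j)"
proof -
  interpret markov_renewal_chain s q M J S
    by (rule markov_renewal_chain.intro) (fact assms)+
  have U: "MRF M J S k i j = (\<Sum>l\<le>k. useq s q l i j)"
    if "i \<in> {1..s}" "j \<in> {1..s}" for k i j
    using that by (rule MRF_eq_sum_useq)
  show ?thesis
  proof (intro ballI allI conjI)
    fix i j k assume i: "i \<in> {1..s}" and j: "j \<in> {1..s}"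
    show "MRF M J S k i j = dg1 k i j + mconv s q (MRF M J S) k i j"
      using useq_renewal[of s q, OF kernel_zero] U i j by (rule renewal_equation_of_cumulative)
    show "MRF M J S k i j = mconv s dg1 (useq s q) k i j"
      by (simp add: mconv_dg1_left[OF i] U[OF i j])
    show "MRF M J S k i j = (\<Sum>l\<in>{l. l \<le> k}. useq s q l i j)"
      by (simp add: U[OF i j] atMost_def)
  qed
qed

end
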